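(* Let $K=\mathbb{F}_q$, $S=K[t_1,\ldots,t_s]$, and let $\mathcal{X}=[A_1\times\cdots\times A_s]\subset\mathbb{P}^{s-1}$ be a projective nested cartesian set with $d_i=|A_i|$. Then $\delta_{\mathcal{X}}(1)=d_2\cdots d_s$.
   Context: Projective nested cartesian set: for subsets $A_1,\ldots,A_s$ of $K$, $\mathcal{X}=[A_1\times\cdots\times A_s]$ is the image of $(A_1\times\cdots\times A_s)\setminus\{0\}$ under $K^s\setminus\{0\}\to\mathbb{P}^{s-1}$, $x\mapsto[x]$, and it is required that (i) $\{0,1\}\subset A_i$ for all $i$; (ii) $a/b\in A_j$ whenever $1\leq i<j\leq s$, $a\in A_j$, $0\neq b\in A_i$; (iii) $d_1\leq\cdots\leq d_s$ where $d_i=|A_i|$. $I(\mathcal{X})$ is the vanishing ideal of $\mathcal{X}$ and $V_{\mathcal{X}}(f)$ the zero set in $\mathcal{X}$ of a form $f$. $\delta_{\mathcal{X}}(d)=\min\{|\mathcal{X}|-|V_{\mathcal{X}}(f)|: f\in S_d,\ f\notin I(\mathcal{X})\}$ is the minimum distance of the degree-$d$ projective Reed–Muller-type code on $\mathcal{X}$. *)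

theory Defs
  imports Main
begin

text \<open>Vectors of \<open>K^s\<close> are functions \<open>nat \<Rightarrow> 'a\<close> vanishing outside \<open>{0..<s}\<close>;
  coordinate \<open>i\<close> (0-based) corresponds to \<open>t_(i+1)\<close> of the paper.\<close>

definition proj_point :: "(nat \<Rightarrow> ('a::field)) \<Rightarrow> (nat \<Rightarrow> 'a) set" where
  "proj_point x = {(\<lambda>i. c * x i) | c. c \<noteq> 0}"

definition proj_cart_set :: "nat \<Rightarrow> (nat \<Rightarrow> ('a::field) set) \<Rightarrow> (nat \<Rightarrow> 'a) set set" where
  "proj_cart_set s A =
     proj_point ` {x. (\<forall>i<s. x i \<in> A i) \<and> (\<forall>i\<ge>s. x i = 0) \<and> x \<noteq> (\<lambda>i. 0)}"

definition proj_nested_cartesian :: "nat \<Rightarrow> (nat \<Rightarrow> ('a::field) set) \<Rightarrow> bool" where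
  "proj_nested_cartesian s A \<longleftrightarrow>
     (\<forall>i<s. {0, 1} \<subseteq> A i) \<and>
     (\<forall>i j. i < j \<and> j < s \<longrightarrow> (\<forall>a\<in>A j. \<forall>b\<in>A i. b \<noteq> 0 \<longrightarrow> a / b \<in> A j)) \<and>
     (\<forall>i j. i \<le> j \<and> j < s \<longrightarrow> card (A i) \<le> card (A j))"

text \<open>A form of degree 1 in \<open>S = K[t_1,\<dots>,t_s]\<close> is a linear form \<open>\<Sum>i<s. c_i t_(i+1)\<close>,
  given by its coefficient function \<open>c\<close>.\<close>
definition lin_eval :: "nat \<Rightarrow> (nat \<Rightarrow> ('a::field)) \<Rightarrow> (nat \<Rightarrow> 'a) \<Rightarrow> 'a" where
  "lin_eval s c x = (\<Sum>i<s. c i * x i)"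

definition zero_set_lin :: "nat \<Rightarrow> (nat \<Rightarrow> 'a) set set \<Rightarrow> (nat \<Rightarrow> ('a::field)) \<Rightarrow> (nat \<Rightarrow> 'a) set set" where
  "zero_set_lin s X c = {P \<in> X. \<forall>x\<in>P. lin_eval s c x = 0}"

definition in_vanishing_ideal_lin :: "nat \<Rightarrow> (nat \<Rightarrow> 'a) set set \<Rightarrow> (nat \<Rightarrow> ('a::field)) \<Rightarrow> bool" where
  "in_vanishing_ideal_lin s X c \<longleftrightarrow> (\<forall>P\<in>X. \<forall>x\<in>P. lin_eval s c x = 0)"

definition delta1 :: "nat \<Rightarrow> (nat \<Rightarrow> 'a) set set \<Rightarrow> ('a::field) itself \<Rightarrow> nat" where
  "delta1 s X _ = Min {card X - card (zero_set_lin s X c) | c :: nat \<Rightarrow> 'a.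
                          \<not> in_vanishing_ideal_lin s X c}"

end

theory Submission
  imports Defs
begin

text \<open>Every point of \<open>[A_1 \<times> \<dots> \<times> A_s]\<close> has exactly one representative whose first nonzero
  coordinate is \<open>1\<close>, and the nesting conditions keep the remaining coordinates of that
  representative in the \<open>A_j\<close>. So \<open>\<delta>_X(1)\<close> is the least number of these representatives at which
  a nonzero linear form \<open>f = \<Sum> c_i t_i\<close> does not vanish. Count them coordinate by coordinate: if
  \<open>c_k = 0\<close>, appending the \<open>k\<close>-th coordinate multiplies the count by \<open>d_k\<close>; if \<open>c_k \<noteq> 0\<close>, each
  of the \<open>N\<close> earlier representatives has at least \<open>d_k - 1\<close> extensions where \<open>f \<noteq> 0\<close>, and the
  new representative \<open>e_k\<close> is one more. Since \<open>d_j \<le> d_k\<close> for \<open>j < k\<close> and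
  \<open>N = 1 + d_(k-1) + d_(k-1) d_(k-2) + \<dots>\<close>, the bound \<open>N (d_k - 1) + 1\<close> is at least
  \<open>d_2 \<cdots> d_k\<close>. The form \<open>t_1\<close> attains \<open>d_2 \<cdots> d_s\<close>.\<close>

definition normalized_reps :: "nat \<Rightarrow> (nat \<Rightarrow> ('a::field) set) \<Rightarrow> (nat \<Rightarrow> 'a) set" where
  "normalized_reps k A =
     {x. \<exists>p<k. (\<forall>j<p. x j = 0) \<and> x p = 1 \<and> (\<forall>j. p < j \<and> j < k \<longrightarrow> x j \<in> A j) \<and> (\<forall>j\<ge>k. x j = 0)}"

definition unit_vec :: "nat \<Rightarrow> nat \<Rightarrow> 'a::zero_neq_one" where
  "unit_vec k = (\<lambda>i. if i = k then 1 else 0)"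

definition lin_weight :: "nat \<Rightarrow> (nat \<Rightarrow> ('a::field) set) \<Rightarrow> (nat \<Rightarrow> 'a) \<Rightarrow> nat" where
  "lin_weight k A c = card {x \<in> normalized_reps k A. lin_eval k c x \<noteq> 0}"

lemma normalized_reps_0 [simp]: "normalized_reps 0 A = {}"
  by (auto simp: normalized_reps_def)

lemma normalized_reps_vanish: "x \<in> normalized_reps k A \<Longrightarrow> k \<le> j \<Longrightarrow> x j = 0"
  by (auto simp: normalized_reps_def)

lemma normalized_reps_Suc:
  "normalized_reps (Suc k) A =
     insert (unit_vec k) ((\<lambda>(x, a). x(k := a)) ` (normalized_reps k A \<times> A k))"
proof (intro equalityI subsetI)
  fix x assume "x \<in> normalized_reps (Suc k) A"
  then obtain p where p: "p < Suc k" "\<forall>j<p. x j = 0" "x p = 1"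
    "\<forall>j. p < j \<and> j < Suc k \<longrightarrow> x j \<in> A j" "\<forall>j\<ge>Suc k. x j = 0"
    unfolding normalized_reps_def by blast
  show "x \<in> insert (unit_vec k) ((\<lambda>(x, a). x(k := a)) ` (normalized_reps k A \<times> A k))"
  proof (cases "p = k")
    case True
    have "x j = 0" if "j \<noteq> k" for j
      using p True that by (cases "j < k") auto
    then have "x = unit_vec k"
      using p True by (auto simp: unit_vec_def)
    then show ?thesis by simp
  next
    case False
    then have "x(k := 0) \<in> normalized_reps k A" "x k \<in> A k"
      using p unfolding normalized_reps_def by (auto intro!: exI[of _ p])
    moreover have "x = (x(k := 0))(k := x k)" by simp
    ultimately show ?thesis by (auto intro: rev_image_eqI)
  qed
next
  fix x assume "x \<in> insert (unit_vec k) ((\<lambda>(x, a). x(k := a)) ` (normalized_reps k A \<times> A k))"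
  then show "x \<in> normalized_reps (Suc k) A"
  proof
    assume "x = unit_vec k"
    then show ?thesis
      unfolding normalized_reps_def unit_vec_def by (intro CollectI exI[of _ k]) auto
  next
    assume "x \<in> (\<lambda>(x, a). x(k := a)) ` (normalized_reps k A \<times> A k)"
    then obtain y a where "x = y(k := a)" "a \<in> A k" and y: "y \<in> normalized_reps k A"
      by auto
    moreover obtain p where "p < k" "\<forall>j<p. y j = 0" "y p = 1"
      "\<forall>j. p < j \<and> j < k \<longrightarrow> y j \<in> A j" "\<forall>j\<ge>k. y j = 0"
      using y unfolding normalized_reps_def by blast
    ultimately show ?thesis
      unfolding normalized_reps_def by (intro CollectI exI[of _ p]) (auto simp: less_Suc_eq)
  qed
qed

lemma inj_on_extend_normalized_reps: "inj_on (\<lambda>(x, a). x(k := a)) (normalized_reps k A \<times> B)"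
  by (rule inj_onI, clarify)
    (metis fun_upd_idem_iff fun_upd_upd normalized_reps_vanish order_refl fun_upd_same)

lemma unit_vec_notin_extend_normalized_reps:
  "unit_vec k \<notin> (\<lambda>(x, a). x(k := a)) ` (normalized_reps k A \<times> B)"
proof
  assume "unit_vec k \<in> (\<lambda>(x, a). x(k := a)) ` (normalized_reps k A \<times> B)"
  then obtain y a where y: "y \<in> normalized_reps k A" and "unit_vec k = y(k := a)"
    by auto
  moreover obtain p where "p < k" "y p = 1"
    using y unfolding normalized_reps_def by blast
  ultimately have "unit_vec k p = (1::'a)" by simp
  with \<open>p < k\<close> show False by (simp add: unit_vec_def)
qed

lemma finite_normalized_reps [simp]:
  "finite (normalized_reps k (A :: nat \<Rightarrow> ('a::{finite,field}) set))"
  by (induction k) (auto simp: normalized_reps_Suc)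

lemma card_normalized_reps_Suc:
  "card (normalized_reps (Suc k) (A :: nat \<Rightarrow> ('a::{finite,field}) set))
     = card (normalized_reps k A) * card (A k) + 1"
  using unit_vec_notin_extend_normalized_reps[of k A "A k"]
  by (simp add: normalized_reps_Suc card_image[OF inj_on_extend_normalized_reps]
      card_cartesian_product)

lemma lin_eval_Suc_upd: "lin_eval (Suc k) c (x(k := a)) = lin_eval k c x + c k * a"
  by (simp add: lin_eval_def)

lemma lin_eval_unit_vec: "k < s \<Longrightarrow> lin_eval s c (unit_vec k) = c k"
  unfolding lin_eval_def unit_vec_def by (simp add: if_distrib[of "(*) _"] cong: if_cong)

lemma lin_weight_Suc_coeff_zero:
  fixes A :: "nat \<Rightarrow> ('a::{finite,field}) set"
  assumes "c k = 0"
  shows "lin_weight (Suc k) A c = card (A k) * lin_weight k A c"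
proof -
  let ?N = "{x \<in> normalized_reps k A. lin_eval k c x \<noteq> 0}"
  have "{x \<in> normalized_reps (Suc k) A. lin_eval (Suc k) c x \<noteq> 0}
      = (\<lambda>(x, a). x(k := a)) ` (?N \<times> A k)"
    unfolding normalized_reps_Suc using assms by (auto simp: lin_eval_Suc_upd lin_eval_unit_vec)
  moreover have "inj_on (\<lambda>(x, a). x(k := a)) (?N \<times> A k)"
    by (rule inj_on_subset[OF inj_on_extend_normalized_reps[of k A "A k"]]) auto
  ultimately show ?thesis
    unfolding lin_weight_def by (simp add: card_image card_cartesian_product)
qed

lemma card_affine_nonzero_ge:
  fixes A :: "('a::field) set"
  assumes "finite A" and "c \<noteq> 0"
  shows "card A - 1 \<le> card {a \<in> A. b + c * a \<noteq> 0}"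
proof -
  have "A - {- b / c} \<subseteq> {a \<in> A. b + c * a \<noteq> 0}"
    using assms(2) by (auto simp: field_simps add_eq_0_iff)
  then have "card (A - {- b / c}) \<le> card {a \<in> A. b + c * a \<noteq> 0}"
    using assms(1) by (intro card_mono) auto
  then show ?thesis
    using assms(1) by (simp add: card_Diff_singleton_if split: if_splits)
qed

lemma lin_weight_Suc_coeff_nonzero:
  fixes A :: "nat \<Rightarrow> ('a::{finite,field}) set"
  assumes "c k \<noteq> 0"
  shows "card (normalized_reps k A) * (card (A k) - 1) + 1 \<le> lin_weight (Suc k) A c"
proof -
  define S where "S = Sigma (normalized_reps k A) (\<lambda>x. {a \<in> A k. lin_eval k c x + c k * a \<noteq> 0})"
  have inj: "inj_on (\<lambda>(x, a). x(k := a)) S"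
    by (rule inj_on_subset[OF inj_on_extend_normalized_reps[of k A "A k"]]) (auto simp: S_def)
  have "unit_vec k \<notin> (\<lambda>(x, a). x(k := a)) ` S"
    using unit_vec_notin_extend_normalized_reps[of k A "A k"] unfolding S_def by blast
  moreover have "finite S"
    unfolding S_def by auto
  ultimately have card_extend:
    "card (insert (unit_vec k) ((\<lambda>(x, a). x(k := a)) ` S)) = card S + 1"
    by (simp add: card_image[OF inj])
  have "card (normalized_reps k A) * (card (A k) - 1)
      \<le> (\<Sum>x\<in>normalized_reps k A. card {a \<in> A k. lin_eval k c x + c k * a \<noteq> 0})"
    using sum_mono[of _ "\<lambda>_. card (A k) - 1", OF card_affine_nonzero_ge[OF _ assms]] by simp
  also have "\<dots> = card S"
    unfolding S_def by (rule card_SigmaI[symmetric]) auto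
  finally have "card (normalized_reps k A) * (card (A k) - 1) + 1
      \<le> card (insert (unit_vec k) ((\<lambda>(x, a). x(k := a)) ` S))"
    unfolding card_extend by simp
  also have "\<dots> \<le> lin_weight (Suc k) A c"
    unfolding lin_weight_def using assms
    by (intro card_mono) (auto simp: normalized_reps_Suc S_def lin_eval_Suc_upd lin_eval_unit_vec)
  finally show ?thesis .
qed

lemma prod_card_le_card_normalized_reps:
  fixes A :: "nat \<Rightarrow> ('a::{finite,field}) set"
  assumes "1 \<le> k" and "\<forall>j<k. card (A j) \<le> d" and "1 \<le> d"
  shows "(\<Prod>j\<in>{1..<k}. card (A j)) * d \<le> card (normalized_reps k A) * (d - 1) + 1"
  using assms
proof (induction k rule: nat_induct_at_least)
  case base
  then show ?case
    using card_normalized_reps_Suc[of 0 A] by simp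
next
  case (Suc k)
  let ?P = "\<Prod>j\<in>{1..<k}. card (A j)" and ?N = "card (normalized_reps k A)" and ?e = "card (A k)"
  have IH: "?P * d \<le> ?N * (d - 1) + 1"
    using Suc by simp
  have "?P * ?e * d = ?e * (?P * d)"
    by simp
  also have "\<dots> \<le> ?e * (?N * (d - 1) + 1)"
    using IH by (rule mult_le_mono2)
  also have "\<dots> = ?e * ?N * (d - 1) + ?e"
    by (simp add: algebra_simps)
  also have "\<dots> \<le> ?e * ?N * (d - 1) + d"
    using Suc.prems by simp
  also have "\<dots> = (?N * ?e + 1) * (d - 1) + 1"
    using \<open>1 \<le> d\<close> by (cases d) (simp_all add: algebra_simps)
  finally have "?P * ?e * d \<le> (?N * ?e + 1) * (d - 1) + 1" .
  then show ?case
    using \<open>1 \<le> k\<close> by (simp add: card_normalized_reps_Suc prod.atLeastLessThan_Suc)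
qed

lemma prod_card_le_lin_weight:
  fixes A :: "nat \<Rightarrow> ('a::{finite,field}) set"
  assumes "\<forall>i j. i \<le> j \<and> j < k \<longrightarrow> card (A i) \<le> card (A j)"
    and "\<forall>i<k. A i \<noteq> {}"
    and "\<exists>i<k. c i \<noteq> 0"
  shows "(\<Prod>j\<in>{1..<k}. card (A j)) \<le> lin_weight k A c"
  using assms
proof (induction k)
  case 0
  then show ?case by simp
next
  case (Suc k)
  show ?case
  proof (cases "c k = 0")
    case True
    then have "\<exists>i<k. c i \<noteq> 0"
      using Suc.prems(3) less_Suc_eq by auto
    then have "1 \<le> k" and "(\<Prod>j\<in>{1..<k}. card (A j)) \<le> lin_weight k A c"
      using Suc by auto
    then show ?thesis
      by (simp add: lin_weight_Suc_coeff_zero[of c k A, OF True] prod.atLeastLessThan_Suc)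
  next
    case False
    have "1 \<le> card (A k)"
      using Suc.prems(2) by (simp add: Suc_le_eq card_gt_0_iff)
    moreover have "\<forall>j<k. card (A j) \<le> card (A k)"
      using Suc.prems(1) by simp
    ultimately have "k = 0 \<or> (\<Prod>j\<in>{1..<Suc k}. card (A j))
        \<le> card (normalized_reps k A) * (card (A k) - 1) + 1"
      using prod_card_le_card_normalized_reps[of k A "card (A k)"]
      by (auto simp: prod.atLeastLessThan_Suc mult.commute)
    then show ?thesis
      using lin_weight_Suc_coeff_nonzero[of c k A, OF False] by auto
  qed
qed

lemma unit_vec_0_mem_normalized_reps:
  assumes "0 < k" and "\<forall>j<k. 0 \<in> A j"
  shows "unit_vec 0 \<in> normalized_reps k A"
  using assms unfolding normalized_reps_def unit_vec_def by (intro CollectI exI[of _ 0]) auto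

lemma lin_weight_unit_vec_0:
  fixes A :: "nat \<Rightarrow> ('a::{finite,field}) set"
  assumes "0 < k"
  shows "lin_weight k A (unit_vec 0) = (\<Prod>j\<in>{1..<k}. card (A j))"
  using assms
proof (induction k rule: nat_induct_non_zero)
  case 1
  have "{x \<in> normalized_reps 1 A. lin_eval 1 (unit_vec 0) x \<noteq> 0} = {unit_vec 0 :: nat \<Rightarrow> 'a}"
    by (auto simp: normalized_reps_Suc lin_eval_def unit_vec_def)
  then show ?case
    by (simp add: lin_weight_def)
next
  case (Suc k)
  have "unit_vec 0 k = (0::'a)"
    using \<open>0 < k\<close> by (simp add: unit_vec_def)
  then show ?case
    using Suc by (simp add: lin_weight_Suc_coeff_zero prod.atLeastLessThan_Suc mult.commute)
qed

lemma mem_proj_point: "x \<in> proj_point x"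
  unfolding proj_point_def by (intro CollectI exI[of _ 1]) simp

lemma proj_point_scale:
  fixes y :: "nat \<Rightarrow> 'a::field"
  assumes "k \<noteq> 0"
  shows "proj_point (\<lambda>i. k * y i) = proj_point y"
proof -
  have "(\<exists>c. c \<noteq> 0 \<and> z = (\<lambda>i. c * (k * y i))) \<longleftrightarrow> (\<exists>c. c \<noteq> 0 \<and> z = (\<lambda>i. c * y i))" for z
  proof
    assume "\<exists>c. c \<noteq> 0 \<and> z = (\<lambda>i. c * (k * y i))"
    then show "\<exists>c. c \<noteq> 0 \<and> z = (\<lambda>i. c * y i)"
      using assms by (metis mult.assoc no_zero_divisors)
  next
    assume "\<exists>c. c \<noteq> 0 \<and> z = (\<lambda>i. c * y i)"
    then show "\<exists>c. c \<noteq> 0 \<and> z = (\<lambda>i. c * (k * y i))"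
      using assms by (metis divide_eq_0_iff mult.assoc nonzero_divide_eq_eq)
  qed
  then show ?thesis
    unfolding proj_point_def by blast
qed

lemma lin_eval_scale: "lin_eval s c (\<lambda>i. k * x i) = k * lin_eval s c x"
  unfolding lin_eval_def by (simp add: sum_distrib_left algebra_simps)

lemma lin_eval_vanishes_on_proj_point:
  "(\<forall>z\<in>proj_point x. lin_eval s c z = 0) \<longleftrightarrow> lin_eval s c x = 0"
proof
  assume "\<forall>z\<in>proj_point x. lin_eval s c z = 0"
  then show "lin_eval s c x = 0"
    using mem_proj_point by blast
next
  assume "lin_eval s c x = 0"
  then show "\<forall>z\<in>proj_point x. lin_eval s c z = 0"
    unfolding proj_point_def by (auto simp: lin_eval_scale)
qed

lemma inj_on_proj_point_normalized_reps: "inj_on proj_point (normalized_reps k A)"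
proof (rule inj_onI)
  fix x y assume x: "x \<in> normalized_reps k A" and y: "y \<in> normalized_reps k A"
    and "proj_point x = proj_point y"
  then obtain c where "c \<noteq> 0" and xy: "\<And>j. x j = c * y j"
    using mem_proj_point[of x] unfolding proj_point_def by auto
  obtain p where p: "\<forall>j<p. x j = 0" "x p = 1"
    using x unfolding normalized_reps_def by blast
  obtain q where q: "\<forall>j<q. y j = 0" "y q = 1"
    using y unfolding normalized_reps_def by blast
  have "\<not> p < q"
    using p(2) q(1) xy[of p] by auto
  moreover have "\<not> q < p"
    using p(1) q(2) xy[of q] \<open>c \<noteq> 0\<close> by auto
  ultimately have "p = q"
    by simp
  then have "c = 1"
    using p q xy[of p] by simp
  then show "x = y"
    using xy by auto
qed

text \<open>Dividing by the first nonzero coordinate \<open>x\<^sub>p\<close> keeps the later coordinates in the \<open>A\<^sub>j\<close>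
  precisely because of the nesting condition \<open>a / b \<in> A\<^sub>j\<close> for \<open>b \<in> A\<^sub>p\<close>, \<open>p < j\<close>.\<close>
lemma proj_cart_set_eq_image_normalized_reps:
  assumes "proj_nested_cartesian s A"
  shows "proj_cart_set s A = proj_point ` normalized_reps s A"
proof -
  let ?C = "{x. (\<forall>i<s. x i \<in> A i) \<and> (\<forall>i\<ge>s. x i = 0) \<and> x \<noteq> (\<lambda>i. 0)}"
  have zero_one: "\<forall>i<s. 0 \<in> A i \<and> 1 \<in> A i"
    and nested: "\<forall>i j. i < j \<and> j < s \<longrightarrow> (\<forall>a\<in>A j. \<forall>b\<in>A i. b \<noteq> 0 \<longrightarrow> a / b \<in> A j)"
    using assms unfolding proj_nested_cartesian_def by auto
  have "normalized_reps s A \<subseteq> ?C"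
  proof
    fix x assume "x \<in> normalized_reps s A"
    then obtain p where p: "p < s" "\<forall>j<p. x j = 0" "x p = 1"
      "\<forall>j. p < j \<and> j < s \<longrightarrow> x j \<in> A j" "\<forall>j\<ge>s. x j = 0"
      unfolding normalized_reps_def by blast
    then have "x i \<in> A i" if "i < s" for i
      using zero_one that by (cases "i < p"; cases "i = p") auto
    moreover have "x \<noteq> (\<lambda>i. 0)"
      using p(3) by (metis one_neq_zero)
    ultimately show "x \<in> ?C"
      using p by blast
  qed
  moreover have "proj_point x \<in> proj_point ` normalized_reps s A" if x: "x \<in> ?C" for x
  proof -
    obtain i where "x i \<noteq> 0"
      using x by (auto simp: fun_eq_iff)
    define p where "p = (LEAST i. x i \<noteq> 0)"
    have xp: "x p \<noteq> 0"
      unfolding p_def by (rule LeastI) fact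
    have "x j = 0" if "s \<le> j" for j
      using x that by simp
    with xp have "p < s"
      by (metis not_le)
    define y where "y = (\<lambda>i. x i / x p)"
    have "y \<in> normalized_reps s A"
      unfolding normalized_reps_def
    proof (intro CollectI exI[of _ p] conjI allI impI)
      show "y j = 0" if "j < p" for j
        using not_less_Least[of j "\<lambda>i. x i \<noteq> 0"] that by (simp add: y_def p_def)
      show "y j \<in> A j" if "p < j \<and> j < s" for j
        using nested that x \<open>p < s\<close> xp unfolding y_def by auto
    qed (use \<open>p < s\<close> xp x in \<open>auto simp: y_def\<close>)
    moreover have "proj_point x = proj_point y"
      using proj_point_scale[OF xp, of y] xp by (simp add: y_def)
    ultimately show ?thesis by blast
  qed
  ultimately show ?thesis
    unfolding proj_cart_set_def by blast
qed

lemma card_diff_zero_set_lin_eq_lin_weight: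
  fixes A :: "nat \<Rightarrow> ('a::{finite,field}) set"
  assumes "proj_nested_cartesian s A"
  shows "card (proj_cart_set s A) - card (zero_set_lin s (proj_cart_set s A) c) = lin_weight s A c"
proof -
  let ?X = "proj_cart_set s A"
  have X: "?X = proj_point ` normalized_reps s A"
    using proj_cart_set_eq_image_normalized_reps[OF assms] .
  have "?X - zero_set_lin s ?X c
      = proj_point ` {x \<in> normalized_reps s A. \<not> (\<forall>z\<in>proj_point x. lin_eval s c z = 0)}"
    unfolding zero_set_lin_def X by blast
  also have "\<dots> = proj_point ` {x \<in> normalized_reps s A. lin_eval s c x \<noteq> 0}"
    by (simp only: lin_eval_vanishes_on_proj_point)
  finally have "?X - zero_set_lin s ?X c = proj_point ` {x \<in> normalized_reps s A. lin_eval s c x \<noteq> 0}" .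
  moreover have "card (proj_point ` {x \<in> normalized_reps s A. lin_eval s c x \<noteq> 0}) = lin_weight s A c"
    unfolding lin_weight_def
    by (rule card_image) (rule inj_on_subset[OF inj_on_proj_point_normalized_reps], auto)
  moreover have "zero_set_lin s ?X c \<subseteq> ?X" and "finite ?X"
    unfolding zero_set_lin_def X by auto
  ultimately show ?thesis
    by (metis card_Diff_subset finite_subset)
qed

lemma coeff_nonzero_if_not_in_vanishing_ideal_lin:
  assumes "\<not> in_vanishing_ideal_lin s X c"
  shows "\<exists>i<s. c i \<noteq> 0"
proof (rule ccontr)
  assume "\<not> (\<exists>i<s. c i \<noteq> 0)"
  then have "lin_eval s c x = 0" for x
    unfolding lin_eval_def by simp
  then show False
    using assms unfolding in_vanishing_ideal_lin_def by blast
qed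

lemma unit_vec_0_not_in_vanishing_ideal_lin:
  assumes "proj_nested_cartesian s A" and "0 < s"
  shows "\<not> in_vanishing_ideal_lin s (proj_cart_set s A) (unit_vec 0)"
proof -
  have "unit_vec 0 \<in> normalized_reps s A"
    using assms unfolding proj_nested_cartesian_def by (intro unit_vec_0_mem_normalized_reps) auto
  then have "proj_point (unit_vec 0) \<in> proj_cart_set s A"
    by (simp add: proj_cart_set_eq_image_normalized_reps[OF assms(1)])
  moreover have "lin_eval s (unit_vec 0) (unit_vec 0) = (1::'a)"
    using lin_eval_unit_vec[of 0 s "unit_vec 0"] assms(2) by (simp add: unit_vec_def)
  ultimately show ?thesis
    unfolding in_vanishing_ideal_lin_def using mem_proj_point[of "unit_vec 0"] by fastforce
qed

theorem proposition6p8: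
  fixes s :: nat and A :: "nat \<Rightarrow> ('a::{finite,field}) set"
  assumes "s \<ge> 1"
    and "proj_nested_cartesian s A"
  shows "delta1 s (proj_cart_set s A) TYPE('a) = (\<Prod>i\<in>{1..<s}. card (A i))"
proof -
  let ?X = "proj_cart_set s A" and ?P = "\<Prod>i\<in>{1..<s}. card (A i)"
  let ?D = "{card ?X - card (zero_set_lin s ?X c) | c :: nat \<Rightarrow> 'a. \<not> in_vanishing_ideal_lin s ?X c}"
  have D: "?D = {lin_weight s A c | c. \<not> in_vanishing_ideal_lin s ?X c}"
    by (simp add: card_diff_zero_set_lin_eq_lin_weight[OF assms(2)])
  have "?P \<le> lin_weight s A c" if "\<not> in_vanishing_ideal_lin s ?X c" for c
    using assms(2) coeff_nonzero_if_not_in_vanishing_ideal_lin[OF that]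
    unfolding proj_nested_cartesian_def by (intro prod_card_le_lin_weight) auto
  moreover have "?P \<in> ?D"
    using unit_vec_0_not_in_vanishing_ideal_lin[OF assms(2)] lin_weight_unit_vec_0[of s A] assms(1)
    unfolding D by (intro CollectI exI[of _ "unit_vec 0"]) simp
  moreover have "finite ?D"
    by (rule finite_subset[of _ "{..card ?X}"]) auto
  ultimately show ?thesis
    unfolding delta1_def D by (intro Min_eqI) auto
qed

end
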